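(* Let $\gamma\in(0,1]$ and let $T$ be a positive integer, with $T\ge2$ if $\gamma=1$. For all $\delta>0$ and $\eta>0$, $$\mathbb{P}\left(\exists\,t\in\{1,\dots,T\}:\ N_t(\gamma^2)>0,\ \frac{R_t(\gamma)-M_t(\gamma)}{\sqrt{N_t(\gamma^2)}}>\delta\right)\le\left\lceil\frac{\log\big(\gamma^{-2T}n_T(\gamma^2)\big)}{\log(1+\eta)}\right\rceil\exp\!\left(-\frac{2\delta^2}{B^2}\Big(1-\frac{\eta^2}{16}\Big)\right).$$
   Context: On a probability space $(\Omega,\mathcal A,\mathbb P)$, let $(X_t)_{t\ge1}$ be independent random variables with $X_t\in[0,B]$ a.s. and $\mu_t=\mathbb E[X_t]$. Let $(\mathcal F_t)_{t\ge0}$ be a filtration with $\sigma(X_1,\dots,X_t)\subset\mathcal F_t$ and $X_s$ independent of $\mathcal F_t$ for $s>t$. Let $(\epsilon_t)_{t\ge1}$ be $\{0,1\}$-valued with $\epsilon_t$ $\mathcal F_{t-1}$-measurable. For $\gamma\in(0,1]$ set $R_t(\gamma)=\sum_{s=1}^t\gamma^{t-s}X_s\epsilon_s$, $M_t(\gamma)=\sum_{s=1}^t\gamma^{t-s}\mu_s\epsilon_s$, $N_t(\gamma)=\sum_{s=1}^t\gamma^{t-s}\epsilon_s$ (so $N_t(\gamma^2)=\sum_{s=1}^t\gamma^{2(t-s)}\epsilon_s$), and $n_t(\gamma)=\sum_{s=1}^t\gamma^{t-s}$ (so $n_T(\gamma^2)=\sum_{s=1}^T\gamma^{2(T-s)}$).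 *)

theory Defs
  imports "HOL-Probability.Probability"
begin

definition Rdisc :: "(nat \<Rightarrow> 'a \<Rightarrow> real) \<Rightarrow> (nat \<Rightarrow> 'a \<Rightarrow> real) \<Rightarrow> real \<Rightarrow> nat \<Rightarrow> 'a \<Rightarrow> real" where
  "Rdisc X eps g t \<omega> = (\<Sum>s=1..t. g ^ (t - s) * X s \<omega> * eps s \<omega>)"

definition Mdisc :: "(nat \<Rightarrow> real) \<Rightarrow> (nat \<Rightarrow> 'a \<Rightarrow> real) \<Rightarrow> real \<Rightarrow> nat \<Rightarrow> 'a \<Rightarrow> real" where
  "Mdisc mu eps g t \<omega> = (\<Sum>s=1..t. g ^ (t - s) * mu s * eps s \<omega>)"

definition Ndisc :: "(nat \<Rightarrow> 'a \<Rightarrow> real) \<Rightarrow> real \<Rightarrow> nat \<Rightarrow> 'a \<Rightarrow> real" where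
  "Ndisc eps g t \<omega> = (\<Sum>s=1..t. g ^ (t - s) * eps s \<omega>)"

definition ndisc :: "real \<Rightarrow> nat \<Rightarrow> real" where
  "ndisc g t = (\<Sum>s=1..t. g ^ (t - s))"

end

theory Submission
  imports Defs
begin

(*
  Put g = 1/\<gamma>.  Multiplying R - M by g^t and N by g^(2t) turns them into the
  undiscounted sums S t = \<Sum>s\<le>t. g^s eps_s (X_s - mu_s) and V t = \<Sum>s\<le>t. g^(2s) eps_s,
  so the normalised deviation (R - M)/sqrt N becomes S/sqrt V.  For every \<lambda> > 0 the
  process W_\<lambda> t = exp (\<lambda> S t - \<lambda>^2 B^2 V t / 8) starts at 1 and is a nonnegative
  supermartingale (Hoeffding's lemma, using that eps_s is predictable and X_s independent
  of the past), so Ville's maximal inequality gives P(\<exists>t\<le>T. W_\<lambda> t \<ge> L) \<le> 1/L.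
  A large deviation S > \<delta> sqrt V forces V into one of the geometric slices
  [q^k, q^(k+1)], q = 1 + \<eta>, k < D, and on slice k the choice
  \<lambda>_k = 4\<delta> / (B^2 q^(k/2) q^(1/4)) makes W_{\<lambda>_k} exceed exp (2\<delta>^2/B^2 (1 - \<eta>^2/16)).
  A union bound over the D slices finishes the proof.
*)


lemma geometric_slice_exists:
  fixes q v :: real
  assumes "1 \<le> v" "v \<le> q ^ D" "D \<ge> 1"
  shows "\<exists>k<D. q ^ k \<le> v \<and> v \<le> q ^ Suc k"
  using assms(2,3)
proof (induction D)
  case 0
  then show ?case by simp
next
  case (Suc D)
  show ?case
  proof (cases "D \<ge> 1 \<and> v \<le> q ^ D")
    case True
    then obtain k where "k < D" "q ^ k \<le> v \<and> v \<le> q ^ Suc k"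
      using Suc.IH by auto
    then show ?thesis by (intro exI[of _ k]) auto
  next
    case False
    then have "q ^ D \<le> v" using assms(1) by (cases "D = 0") auto
    then show ?thesis using Suc.prems by (intro exI[of _ D]) auto
  qed
qed

lemma ceiling_log_ratio:
  fixes q U :: real
  assumes q: "q > 1" and U: "U > 1"
  shows "1 \<le> nat \<lceil>ln U / ln q\<rceil>" and "U \<le> q ^ nat \<lceil>ln U / ln q\<rceil>"
proof -
  have pos: "ln U / ln q > 0" using assms by simp
  then show "1 \<le> nat \<lceil>ln U / ln q\<rceil>" by linarith
  have "ln U / ln q \<le> real (nat \<lceil>ln U / ln q\<rceil>)" using pos by linarith
  then have "ln U \<le> real (nat \<lceil>ln U / ln q\<rceil>) * ln q" using q by (simp add: divide_le_eq)
  also have "\<dots> = ln (q ^ nat \<lceil>ln U / ln q\<rceil>)" using q by (simp add: ln_realpow)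
  finally show "U \<le> q ^ nat \<lceil>ln U / ln q\<rceil>" using U q by simp
qed

lemma parabola_near_one:
  fixes x y :: real
  assumes y: "y > 1" and lo: "1 / y \<le> x" and hi: "x \<le> y"
  shows "1 - (y ^ 4 - 1)\<^sup>2 / 16 \<le> 2 * x - x\<^sup>2"
proof -
  have quartic: "y - 1 \<le> (y ^ 4 - 1) / 4"
  proof -
    have "1 \<le> y\<^sup>2" "1 \<le> y ^ 3" using y by (simp_all add: one_le_power less_imp_le)
    then have "0 \<le> (y - 1) * (y ^ 3 + y\<^sup>2 + y - 3)"
      using y by (intro mult_nonneg_nonneg) linarith+
    also have "\<dots> = y ^ 4 - 1 - 4 * (y - 1)"
      by (simp add: algebra_simps power2_eq_square power3_eq_cube power4_eq_xxxx)
    finally show ?thesis by simp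
  qed
  have recip: "1 - 1 / y \<le> y - 1"
  proof -
    have "0 \<le> (y - 1)\<^sup>2 / y" using y by simp
    also have "\<dots> = (y - 1) - (1 - 1 / y)" using y by (simp add: field_simps power2_eq_square)
    finally show ?thesis by simp
  qed
  have "\<bar>x - 1\<bar> \<le> (y ^ 4 - 1) / 4" using lo hi quartic recip by linarith
  then have "(x - 1)\<^sup>2 \<le> ((y ^ 4 - 1) / 4)\<^sup>2"
    by (metis abs_ge_zero order_trans power2_abs power_mono)
  moreover have "2 * x - x\<^sup>2 = 1 - (x - 1)\<^sup>2" by (simp add: power2_eq_square algebra_simps)
  ultimately show ?thesis by (simp add: power_divide)
qed

(* On the slice a \<le> v \<le> a y^4, the tuned parameter lam makes the exponent of the
   exponential supermartingale nearly as large as the optimal value 2\<delta>^2/B^2. *)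
lemma slice_exponent_bound:
  fixes B \<delta> y a v s :: real
  assumes B: "B > 0" and \<delta>: "\<delta> > 0" and y: "y > 1" and a: "a > 0"
    and av: "a \<le> v" and va: "v \<le> a * y ^ 4" and s: "\<delta> * sqrt v < s"
  defines "lam \<equiv> 4 * \<delta> / (B\<^sup>2 * (sqrt a * y))"
  shows "2 * \<delta>\<^sup>2 / B\<^sup>2 * (1 - (y ^ 4 - 1)\<^sup>2 / 16) \<le> lam * s - lam\<^sup>2 * B\<^sup>2 * v / 8"
proof -
  define x where "x = sqrt v / (sqrt a * y)"
  have sa: "sqrt a > 0" using a by simp
  have lam0: "lam > 0" using B \<delta> sa y by (simp add: lam_def)
  have "y ^ 4 = (y\<^sup>2)\<^sup>2" by simp
  then have "sqrt (a * y ^ 4) = sqrt a * y\<^sup>2" by (simp only: real_sqrt_mult real_sqrt_abs) simp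
  then have "sqrt v \<le> sqrt a * y\<^sup>2" using va by (metis real_sqrt_le_iff)
  then have hi: "x \<le> y" unfolding x_def using sa y by (simp add: divide_le_eq power2_eq_square mult_ac)
  have "sqrt a \<le> sqrt v" using av by simp
  then have lo: "1 / y \<le> x" unfolding x_def using sa y by (simp add: divide_simps)
  have linear: "lam * (\<delta> * sqrt v) = 4 * \<delta>\<^sup>2 / B\<^sup>2 * x"
    using B sa y unfolding x_def lam_def by (simp add: field_simps power2_eq_square)
  have quadratic: "lam\<^sup>2 * B\<^sup>2 * v / 8 = 2 * \<delta>\<^sup>2 / B\<^sup>2 * x\<^sup>2"
  proof -
    have "x\<^sup>2 = v / (a * y\<^sup>2)" and lam2: "lam\<^sup>2 = 16 * \<delta>\<^sup>2 / (B ^ 4 * (a * y\<^sup>2))"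
      unfolding x_def lam_def using av a
      by (simp_all add: power_divide power_mult_distrib flip: power_mult)
    then have "v = x\<^sup>2 * (a * y\<^sup>2)" using a y by (simp add: field_simps)
    then show ?thesis using lam2 B a y by (simp add: field_simps power2_eq_square power4_eq_xxxx)
  qed
  have "2 * \<delta>\<^sup>2 / B\<^sup>2 * (1 - (y ^ 4 - 1)\<^sup>2 / 16) \<le> 2 * \<delta>\<^sup>2 / B\<^sup>2 * (2 * x - x\<^sup>2)"
    using parabola_near_one[OF y lo hi] by (intro mult_left_mono) auto
  also have "\<dots> = lam * (\<delta> * sqrt v) - lam\<^sup>2 * B\<^sup>2 * v / 8"
    unfolding linear quadratic using B by (simp add: field_simps)
  also have "\<dots> \<le> lam * s - lam\<^sup>2 * B\<^sup>2 * v / 8" using s lam0 by simp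
  finally show ?thesis .
qed

lemma power_diff_inverse:
  fixes \<gamma> g :: real
  assumes "\<gamma> * g = 1" "s \<le> t"
  shows "\<gamma> ^ (t - s) = \<gamma> ^ t * g ^ s"
proof -
  have "\<gamma> ^ t * g ^ s = \<gamma> ^ (t - s) * (\<gamma> * g) ^ s"
    using assms(2) by (simp add: power_mult_distrib power_add[symmetric])
  then show ?thesis using assms(1) by simp
qed

lemma power_diff_inverse_squared:
  fixes \<gamma> g :: real
  assumes "\<gamma> * g = 1" "s \<le> t"
  shows "(\<gamma>\<^sup>2) ^ (t - s) = (\<gamma> ^ t)\<^sup>2 * (g ^ s)\<^sup>2"
proof -
  have "(\<gamma>\<^sup>2) ^ (t - s) = (\<gamma> ^ (t - s))\<^sup>2" by (simp flip: power_mult add: mult.commute)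
  then show ?thesis using power_diff_inverse[OF assms] by (simp add: power_mult_distrib)
qed

(* The normalising constant of the theorem exceeds 1, so that at least one slice is needed. *)
lemma sum_power_squares_gt_one:
  fixes g :: real
  assumes g: "g \<ge> 1" and T: "T \<ge> 1" and T2: "g = 1 \<Longrightarrow> T \<ge> 2"
  shows "1 < (\<Sum>s=1..T. (g ^ s)\<^sup>2)"
proof (cases "g = 1")
  case True
  then show ?thesis using T2 by simp
next
  case False
  then have "1 < (g ^ 1)\<^sup>2" using g by simp
  also have "\<dots> \<le> (\<Sum>s=1..T. (g ^ s)\<^sup>2)" by (rule member_le_sum) (use T in auto)
  finally show ?thesis .
qed


lemma (in prob_space) indep_var_of_indep_set:
  fixes U :: "'a \<Rightarrow> real" and h :: "real \<Rightarrow> real"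
  assumes sub: "subalgebra M G"
    and ind: "indep_set (sets G) (sets (vimage_algebra (space M) Y borel))"
    and U: "U \<in> borel_measurable G" and Y: "Y \<in> borel_measurable M"
    and h: "h \<in> borel_measurable borel"
  shows "indep_var borel U borel (h \<circ> Y)"
proof -
  have space_G: "space G = space M" using sub by (simp add: subalgebra_def)
  have "{U -` A \<inter> space M | A. A \<in> sets borel} \<subseteq> sets G"
    using measurable_sets[OF U] space_G by auto
  from sets.sigma_sets_subset[OF this]
  have U_sets: "sigma_sets (space M) {U -` A \<inter> space M | A. A \<in> sets borel} \<subseteq> sets G"
    using space_G by simp
  have "{(h \<circ> Y) -` A \<inter> space M | A. A \<in> sets borel} \<subseteq> {Y -` A \<inter> space M | A. A \<in> sets borel}"
  proof safe
    fix A :: "real set" assume "A \<in> sets borel"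
    then have "h -` A \<in> sets borel" using h by (simp add: measurable_sets_borel)
    then show "\<exists>A'. (h \<circ> Y) -` A \<inter> space M = Y -` A' \<inter> space M \<and> A' \<in> sets borel"
      by (intro exI[of _ "h -` A"]) auto
  qed
  then have hY_sets: "sigma_sets (space M) {(h \<circ> Y) -` A \<inter> space M | A. A \<in> sets borel}
      \<subseteq> sets (vimage_algebra (space M) Y borel)"
    unfolding sets_vimage_algebra by (rule sigma_sets_mono')
  have "indep_sets (case_bool (sigma_sets (space M) {U -` A \<inter> space M | A. A \<in> sets borel})
      (sigma_sets (space M) {(h \<circ> Y) -` A \<inter> space M | A. A \<in> sets borel})) UNIV"
    by (rule indep_sets_mono_sets[OF ind[unfolded indep_set_def]])
       (use U_sets hY_sets in \<open>simp split: bool.split\<close>)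
  moreover have "U \<in> borel_measurable M" using measurable_from_subalg[OF sub U] .
  moreover have "h \<circ> Y \<in> borel_measurable M" using h Y by measurable
  ultimately show ?thesis unfolding indep_var_eq indep_set_def by blast
qed

lemma (in prob_space) nn_integral_indep_mult:
  fixes U :: "'a \<Rightarrow> real" and h :: "real \<Rightarrow> real"
  assumes sub: "subalgebra M G"
    and ind: "indep_set (sets G) (sets (vimage_algebra (space M) Y borel))"
    and U: "U \<in> borel_measurable G" and Y: "Y \<in> borel_measurable M"
    and h: "h \<in> borel_measurable borel"
    and U0: "\<And>\<omega>. 0 \<le> U \<omega>" and h0: "\<And>x. 0 \<le> h x"
  shows "(\<integral>\<^sup>+\<omega>. ennreal (U \<omega> * h (Y \<omega>)) \<partial>M)
       = (\<integral>\<^sup>+\<omega>. ennreal (U \<omega>) \<partial>M) * (\<integral>\<^sup>+\<omega>. ennreal (h (Y \<omega>)) \<partial>M)"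
proof -
  have "indep_var borel (ennreal \<circ> U) borel (ennreal \<circ> (h \<circ> Y))"
    by (rule indep_var_compose[OF indep_var_of_indep_set[OF sub ind U Y h]]) measurable
  moreover have "case_bool borel borel = (\<lambda>_::bool. borel :: ennreal measure)"
    by (simp add: fun_eq_iff split: bool.split)
  ultimately have "indep_vars (\<lambda>_. borel) (case_bool (ennreal \<circ> U) (ennreal \<circ> (h \<circ> Y))) UNIV"
    unfolding indep_var_def by simp
  then have "(\<integral>\<^sup>+\<omega>. (\<Prod>i\<in>UNIV. case_bool (ennreal \<circ> U) (ennreal \<circ> (h \<circ> Y)) i \<omega>) \<partial>M)
      = (\<Prod>i\<in>UNIV. \<integral>\<^sup>+\<omega>. case_bool (ennreal \<circ> U) (ennreal \<circ> (h \<circ> Y)) i \<omega> \<partial>M)"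
    by (intro indep_vars_nn_integral) auto
  then show ?thesis by (simp add: UNIV_bool mult.commute ennreal_mult U0 h0 o_def)
qed


lemma filtration_measurable_mono:
  assumes "filtration \<Omega> F" "i \<le> j" "f \<in> borel_measurable (F i)"
  shows "f \<in> borel_measurable (F j)"
proof -
  have "subalgebra (F j) (F i)"
    using filtration.space_F[OF assms(1)] filtration.sets_F_mono[OF assms(1,2)]
    by (simp add: subalgebra_def)
  then show ?thesis using assms(3) measurable_from_subalg by blast
qed

primrec stopped_at_level :: "(nat \<Rightarrow> 'a \<Rightarrow> real) \<Rightarrow> real \<Rightarrow> nat \<Rightarrow> 'a \<Rightarrow> real" where
  "stopped_at_level W L 0 \<omega> = W 0 \<omega>"
| "stopped_at_level W L (Suc n) \<omega> =
     (if \<forall>t\<in>{..n}. W t \<omega> < L then W (Suc n) \<omega> else stopped_at_level W L n \<omega>)"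

lemma stopped_at_level_below:
  "\<forall>t\<in>{..n}. W t \<omega> < L \<Longrightarrow> stopped_at_level W L n \<omega> = W n \<omega>"
  by (induction n) auto

lemma stopped_at_level_nonneg: "(\<And>t. 0 \<le> W t \<omega>) \<Longrightarrow> 0 \<le> stopped_at_level W L n \<omega>"
  by (induction n) auto

lemma stopped_at_level_reached:
  "\<exists>t\<in>{..n}. L \<le> W t \<omega> \<Longrightarrow> L \<le> stopped_at_level W L n \<omega>"
proof (induction n)
  case 0
  then show ?case by simp
next
  case (Suc n)
  show ?case
  proof (cases "\<forall>t\<in>{..n}. W t \<omega> < L")
    case True
    obtain t where t: "t \<le> Suc n" "L \<le> W t \<omega>" using Suc.prems by auto
    with True have "t = Suc n" by (metis atMost_iff le_SucE not_less)
    then show ?thesis using True t by simp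
  next
    case False
    then have "\<exists>t\<in>{..n}. L \<le> W t \<omega>" by (auto simp: not_less)
    then have "L \<le> stopped_at_level W L n \<omega>" by (rule Suc.IH)
    then show ?thesis by (simp only: stopped_at_level.simps if_not_P[OF False])
  qed
qed

(* Nonnegative supermartingales, with the supermartingale inequality stated on the
   events of the filtration, so that no integrability is required. *)
locale nonneg_supermartingale = prob_space M for M :: "'a measure" +
  fixes F :: "nat \<Rightarrow> 'a measure" and W :: "nat \<Rightarrow> 'a \<Rightarrow> real"
  assumes filtration_F: "filtration (space M) F"
    and subalgebra_F: "\<And>t. subalgebra M (F t)"
    and adapted: "\<And>t. W t \<in> borel_measurable (F t)"
    and nonneg: "\<And>t \<omega>. 0 \<le> W t \<omega>"
    and supermartingale: "\<And>n G. G \<in> sets (F n) \<Longrightarrow>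
      (\<integral>\<^sup>+\<omega>. ennreal (indicator G \<omega> * W (Suc n) \<omega>) \<partial>M)
        \<le> (\<integral>\<^sup>+\<omega>. ennreal (indicator G \<omega> * W n \<omega>) \<partial>M)"
begin

lemma measurable_W [measurable]: "W t \<in> borel_measurable M"
  using measurable_from_subalg[OF subalgebra_F adapted] .

lemma below_level_event: "{\<omega>\<in>space M. \<forall>t\<in>{..m}. W t \<omega> < L} \<in> sets (F m)"
proof -
  have "Measurable.pred (F m) (\<lambda>\<omega>. \<forall>t\<in>{..m}. W t \<omega> < L)"
  proof (intro pred_intros_finite)
    fix t assume "t \<in> {..m}"
    then have [measurable]: "W t \<in> borel_measurable (F m)"
      using filtration_measurable_mono[OF filtration_F _ adapted] by simp
    show "Measurable.pred (F m) (\<lambda>\<omega>. W t \<omega> < L)" by measurable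
  qed simp
  then show ?thesis unfolding pred_def filtration.space_F[OF filtration_F] .
qed

lemma measurable_stopped [measurable]: "stopped_at_level W L m \<in> borel_measurable M"
proof (induction m)
  case 0
  then show ?case by simp
next
  case (Suc m)
  have [measurable]: "stopped_at_level W L m \<in> borel_measurable M" by (fact Suc)
  have "stopped_at_level W L (Suc m)
      = (\<lambda>\<omega>. if \<forall>t\<in>{..m}. W t \<omega> < L then W (Suc m) \<omega> else stopped_at_level W L m \<omega>)"
    by (simp add: fun_eq_iff)
  also have "\<dots> \<in> borel_measurable M" by measurable
  finally show ?case .
qed

lemma stopped_nn_integral_decreasing:
  "(\<integral>\<^sup>+\<omega>. ennreal (stopped_at_level W L (Suc m) \<omega>) \<partial>M)
     \<le> (\<integral>\<^sup>+\<omega>. ennreal (stopped_at_level W L m \<omega>) \<partial>M)"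
proof -
  define G where "G = {\<omega>\<in>space M. \<forall>t\<in>{..m}. W t \<omega> < L}"
  have GF: "G \<in> sets (F m)" unfolding G_def by (rule below_level_event)
  then have [measurable]: "G \<in> sets M" using subalgebra_F by (auto simp: subalgebra_def)
  let ?Q = "stopped_at_level W L"
  have "(\<integral>\<^sup>+\<omega>. ennreal (?Q (Suc m) \<omega>) \<partial>M)
      = (\<integral>\<^sup>+\<omega>. ennreal (indicator G \<omega> * W (Suc m) \<omega>) \<partial>M)
        + (\<integral>\<^sup>+\<omega>. ennreal (indicator (space M - G) \<omega> * ?Q m \<omega>) \<partial>M)"
    by (subst nn_integral_add[symmetric]) (auto intro!: nn_integral_cong simp: G_def)
  also have "\<dots> \<le> (\<integral>\<^sup>+\<omega>. ennreal (indicator G \<omega> * W m \<omega>) \<partial>M)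
        + (\<integral>\<^sup>+\<omega>. ennreal (indicator (space M - G) \<omega> * ?Q m \<omega>) \<partial>M)"
    by (intro add_right_mono supermartingale GF)
  also have "\<dots> = (\<integral>\<^sup>+\<omega>. ennreal (?Q m \<omega>) \<partial>M)"
    by (subst nn_integral_add[symmetric])
       (auto intro!: nn_integral_cong simp: G_def stopped_at_level_below nonneg
         stopped_at_level_nonneg split: split_indicator)
  finally show ?thesis .
qed

theorem ville_inequality:
  assumes init: "(\<integral>\<^sup>+\<omega>. ennreal (W 0 \<omega>) \<partial>M) \<le> 1" and L: "L > 0"
  shows "measure M {\<omega>\<in>space M. \<exists>t\<in>{..n}. L \<le> W t \<omega>} \<le> 1 / L"
proof -
  define A where "A = {\<omega>\<in>space M. \<exists>t\<in>{..n}. L \<le> W t \<omega>}"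
  have A [measurable]: "A \<in> sets M" unfolding A_def by measurable
  have stopped_le: "(\<integral>\<^sup>+\<omega>. ennreal (stopped_at_level W L m \<omega>) \<partial>M) \<le> 1" for m
  proof (induction m)
    case 0
    then show ?case using init by simp
  next
    case (Suc m)
    then show ?case using stopped_nn_integral_decreasing order_trans by blast
  qed
  have "ennreal L * emeasure M A = (\<integral>\<^sup>+\<omega>. ennreal L * indicator A \<omega> \<partial>M)"
    by (rule nn_integral_cmult_indicator[symmetric, OF A])
  also have "\<dots> \<le> (\<integral>\<^sup>+\<omega>. ennreal (stopped_at_level W L n \<omega>) \<partial>M)"
    using stopped_at_level_reached[where W=W and L=L and n=n]
    by (intro nn_integral_mono) (auto simp: A_def ennreal_leI split: split_indicator)
  also have "\<dots> \<le> 1" by (rule stopped_le)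
  finally have "L * measure M A \<le> 1"
    using L by (simp add: emeasure_eq_measure ennreal_mult[symmetric] ennreal_le_1)
  then show ?thesis using L unfolding A_def[symmetric] by (simp add: field_simps)
qed

end


(* The setting of the theorem after rescaling by g = 1/\<gamma>: bounded observations X_s that
   are adapted to F and independent of the past, and predictable selections eps_s. *)
locale discounted_selection = prob_space M for M :: "'a measure" +
  fixes X :: "nat \<Rightarrow> 'a \<Rightarrow> real" and F :: "nat \<Rightarrow> 'a measure"
    and eps :: "nat \<Rightarrow> 'a \<Rightarrow> real" and B g :: real
  assumes B_pos: "B > 0" and g_pos: "g > 0"
    and X_bounded: "\<And>t. t \<ge> 1 \<Longrightarrow> AE \<omega> in M. 0 \<le> X t \<omega> \<and> X t \<omega> \<le> B"
    and F_filt: "filtration (space M) F"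
    and F_sub: "\<And>t. subalgebra M (F t)"
    and X_adapted: "\<And>s t. 1 \<le> s \<Longrightarrow> s \<le> t \<Longrightarrow> X s \<in> borel_measurable (F t)"
    and X_future_indep: "\<And>s t. t < s \<Longrightarrow>
      indep_set (sets (F t)) (sets (vimage_algebra (space M) (X s) borel))"
    and eps_01: "\<And>t \<omega>. t \<ge> 1 \<Longrightarrow> \<omega> \<in> space M \<Longrightarrow> eps t \<omega> \<in> {0, 1}"
    and eps_pred: "\<And>t. t \<ge> 1 \<Longrightarrow> eps t \<in> borel_measurable (F (t - 1))"
begin

definition mu :: "nat \<Rightarrow> real" where
  "mu s = expectation (X s)"

definition S :: "nat \<Rightarrow> 'a \<Rightarrow> real" where
  "S t \<omega> = (\<Sum>s=1..t. g ^ s * eps s \<omega> * (X s \<omega> - mu s))"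

definition V :: "nat \<Rightarrow> 'a \<Rightarrow> real" where
  "V t \<omega> = (\<Sum>s=1..t. (g ^ s)\<^sup>2 * eps s \<omega>)"

definition W :: "real \<Rightarrow> nat \<Rightarrow> 'a \<Rightarrow> real" where
  "W lam t \<omega> = exp (lam * S t \<omega> - lam\<^sup>2 * B\<^sup>2 * V t \<omega> / 8)"

(* The one-step multiplicative increment of W at a time s with eps s = 1. *)
definition H :: "real \<Rightarrow> nat \<Rightarrow> real \<Rightarrow> real" where
  "H a s x = exp (a * (x - mu s) - a\<^sup>2 * B\<^sup>2 / 8)"

lemma X_measurable: "1 \<le> s \<Longrightarrow> X s \<in> borel_measurable M"
  using measurable_from_subalg[OF F_sub X_adapted] by blast

lemma eps_measurable_F: "1 \<le> s \<Longrightarrow> s \<le> t \<Longrightarrow> eps s \<in> borel_measurable (F t)"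
  by (rule filtration_measurable_mono[OF F_filt _ eps_pred]) auto

lemma W_adapted: "W lam t \<in> borel_measurable (F t)"
proof -
  have "S t \<in> borel_measurable (F t)" "V t \<in> borel_measurable (F t)"
    unfolding S_def V_def
    by (intro borel_measurable_sum borel_measurable_times borel_measurable_const
          borel_measurable_diff eps_measurable_F X_adapted; auto)+
  then show ?thesis unfolding W_def by measurable
qed

lemma W_init: "W lam 0 \<omega> = 1"
  by (simp add: W_def S_def V_def)

lemma W_Suc:
  assumes "\<omega> \<in> space M"
  shows "W lam (Suc n) \<omega> = W lam n \<omega> *
    (1 - eps (Suc n) \<omega> + eps (Suc n) \<omega> * H (lam * g ^ Suc n) (Suc n) (X (Suc n) \<omega>))"
proof -
  have S_Suc: "S (Suc n) \<omega> = S n \<omega> + g ^ Suc n * eps (Suc n) \<omega> * (X (Suc n) \<omega> - mu (Suc n))"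
    by (simp add: S_def)
  have V_Suc: "V (Suc n) \<omega> = V n \<omega> + (g ^ Suc n)\<^sup>2 * eps (Suc n) \<omega>"
    by (simp add: V_def)
  consider "eps (Suc n) \<omega> = 0" | "eps (Suc n) \<omega> = 1" using eps_01[OF _ assms] by fastforce
  then show ?thesis
    by cases (simp_all add: W_def H_def S_Suc V_Suc exp_add[symmetric] algebra_simps
        power_mult_distrib)
qed

lemma H_nn_integral_le_1:
  assumes a: "a > 0" and s: "1 \<le> s"
  shows "(\<integral>\<^sup>+\<omega>. ennreal (H a s (X s \<omega>)) \<partial>M) \<le> 1"
proof -
  interpret bounded: interval_bounded_random_variable M "X s" 0 B
    by unfold_locales (use X_measurable[OF s] X_bounded[OF s] in auto)
  have "(\<integral>\<^sup>+\<omega>. ennreal (H a s (X s \<omega>)) \<partial>M)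
      = ennreal (exp (- (a\<^sup>2 * B\<^sup>2 / 8))) * (\<integral>\<^sup>+\<omega>. ennreal (exp (a * (X s \<omega> - expectation (X s)))) \<partial>M)"
    by (subst nn_integral_cmult[symmetric], measurable)
       (auto intro!: nn_integral_cong simp: H_def mu_def ennreal_mult[symmetric] exp_add[symmetric])
  also have "\<dots> \<le> ennreal (exp (- (a\<^sup>2 * B\<^sup>2 / 8))) * ennreal (exp (a\<^sup>2 * (B - 0)\<^sup>2 / 8))"
    by (intro mult_left_mono bounded.Hoeffdings_lemma_nn_integral a) simp
  also have "\<dots> = 1" by (simp add: ennreal_mult[symmetric] exp_add[symmetric])
  finally show ?thesis .
qed

(* The supermartingale step: on an event G of time n, the selection at time n+1 is known
   and X_(n+1) is independent, so Hoeffding's lemma applies to the increment. *)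
lemma W_supermartingale_step:
  assumes lam: "lam > 0" and G: "G \<in> sets (F n)"
  shows "(\<integral>\<^sup>+\<omega>. ennreal (indicator G \<omega> * W lam (Suc n) \<omega>) \<partial>M)
       \<le> (\<integral>\<^sup>+\<omega>. ennreal (indicator G \<omega> * W lam n \<omega>) \<partial>M)"
proof -
  define e where "e = eps (Suc n)"
  define h where "h = H (lam * g ^ Suc n) (Suc n)"
  define U where "U \<omega> = indicator G \<omega> * W lam n \<omega>" for \<omega>
  have e01: "\<omega> \<in> space M \<Longrightarrow> e \<omega> \<in> {0, 1}" for \<omega> using eps_01[of "Suc n"] by (simp add: e_def)
  have U0: "0 \<le> U \<omega>" for \<omega> by (simp add: U_def W_def)
  have U_F: "U \<in> borel_measurable (F n)" unfolding U_def using G W_adapted by measurable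
  have [measurable]: "U \<in> borel_measurable M" using measurable_from_subalg[OF F_sub U_F] .
  have [measurable]: "e \<in> borel_measurable M"
    using measurable_from_subalg[OF F_sub eps_pred] by (simp add: e_def)
  have [measurable]: "X (Suc n) \<in> borel_measurable M" using X_measurable by simp
  have [measurable]: "h \<in> borel_measurable borel" unfolding h_def H_def by measurable
  have "(\<integral>\<^sup>+\<omega>. ennreal (U \<omega> * \<bar>e \<omega>\<bar> * h (X (Suc n) \<omega>)) \<partial>M)
      = (\<integral>\<^sup>+\<omega>. ennreal (U \<omega> * \<bar>e \<omega>\<bar>) \<partial>M) * (\<integral>\<^sup>+\<omega>. ennreal (h (X (Suc n) \<omega>)) \<partial>M)"
    using U_F eps_pred[of "Suc n"]
    by (intro nn_integral_indep_mult[OF F_sub X_future_indep[where t=n and s="Suc n"]])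
       (auto simp: e_def U0 h_def H_def)
  also have "\<dots> \<le> (\<integral>\<^sup>+\<omega>. ennreal (U \<omega> * \<bar>e \<omega>\<bar>) \<partial>M)"
  proof -
    have "(\<integral>\<^sup>+\<omega>. ennreal (h (X (Suc n) \<omega>)) \<partial>M) \<le> 1"
      unfolding h_def using lam g_pos by (intro H_nn_integral_le_1) auto
    from mult_left_mono[OF this, of "\<integral>\<^sup>+\<omega>. ennreal (U \<omega> * \<bar>e \<omega>\<bar>) \<partial>M"]
    show ?thesis by simp
  qed
  finally have selected: "(\<integral>\<^sup>+\<omega>. ennreal (U \<omega> * \<bar>e \<omega>\<bar> * h (X (Suc n) \<omega>)) \<partial>M)
      \<le> (\<integral>\<^sup>+\<omega>. ennreal (U \<omega> * \<bar>e \<omega>\<bar>) \<partial>M)" .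
  have split: "ennreal (indicator G \<omega> * W lam (Suc n) \<omega>)
      = ennreal (U \<omega> * (1 - e \<omega>)) + ennreal (U \<omega> * \<bar>e \<omega>\<bar> * h (X (Suc n) \<omega>))"
    if "\<omega> \<in> space M" for \<omega>
    using e01[OF that] W_Suc[OF that] by (auto simp: U_def e_def h_def mult.assoc)
  have merge: "ennreal (U \<omega> * (1 - e \<omega>)) + ennreal (U \<omega> * \<bar>e \<omega>\<bar>)
      = ennreal (indicator G \<omega> * W lam n \<omega>)" if "\<omega> \<in> space M" for \<omega>
    using e01[OF that] by (auto simp: U_def)
  have "(\<integral>\<^sup>+\<omega>. ennreal (indicator G \<omega> * W lam (Suc n) \<omega>) \<partial>M)
      = (\<integral>\<^sup>+\<omega>. ennreal (U \<omega> * (1 - e \<omega>)) \<partial>M)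
        + (\<integral>\<^sup>+\<omega>. ennreal (U \<omega> * \<bar>e \<omega>\<bar> * h (X (Suc n) \<omega>)) \<partial>M)"
    by (subst nn_integral_add[symmetric], measurable) (intro nn_integral_cong split)
  also have "\<dots> \<le> (\<integral>\<^sup>+\<omega>. ennreal (U \<omega> * (1 - e \<omega>)) \<partial>M)
        + (\<integral>\<^sup>+\<omega>. ennreal (U \<omega> * \<bar>e \<omega>\<bar>) \<partial>M)"
    using selected by (rule add_left_mono)
  also have "\<dots> = (\<integral>\<^sup>+\<omega>. ennreal (indicator G \<omega> * W lam n \<omega>) \<partial>M)"
    by (subst nn_integral_add[symmetric], measurable) (intro nn_integral_cong merge)
  finally show ?thesis .
qed

lemma W_nonneg_supermartingale:
  assumes "lam > 0"
  shows "nonneg_supermartingale M F (W lam)"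
proof unfold_locales
  show "0 \<le> W lam t \<omega>" for t \<omega> by (simp add: W_def)
qed (fact filtration.space_F[OF F_filt] filtration.sets_F_mono[OF F_filt] F_sub W_adapted
       W_supermartingale_step[OF assms])+

lemma W_maximal:
  assumes "lam > 0" "L > 0"
  shows "measure M {\<omega>\<in>space M. \<exists>t\<in>{..n}. L \<le> W lam t \<omega>} \<le> 1 / L"
  using nonneg_supermartingale.ville_inequality[OF W_nonneg_supermartingale[OF assms(1)] _ assms(2)]
  by (simp add: W_init emeasure_space_1)

lemma V_range:
  assumes g: "g \<ge> 1" and \<omega>: "\<omega> \<in> space M" and t: "t \<le> T" and V0: "0 < V t \<omega>"
  shows "1 \<le> V t \<omega>" and "V t \<omega> \<le> (\<Sum>s=1..T. (g ^ s)\<^sup>2)"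
proof -
  have e01: "s \<in> {1..t} \<Longrightarrow> eps s \<omega> \<in> {0, 1}" for s using eps_01 \<omega> by auto
  have e_bounds: "s \<in> {1..t} \<Longrightarrow> 0 \<le> eps s \<omega> \<and> eps s \<omega> \<le> 1" for s
    using e01[of s] by auto
  have gpow: "1 \<le> (g ^ s)\<^sup>2" for s using g by (simp add: one_le_power)
  have "(\<Sum>s=1..t. (g ^ s)\<^sup>2 * eps s \<omega>) \<noteq> 0" using V0 by (simp add: V_def)
  then obtain s where s: "s \<in> {1..t}" "(g ^ s)\<^sup>2 * eps s \<omega> \<noteq> 0"
    using sum.not_neutral_contains_not_neutral by blast
  then have "eps s \<omega> = 1" using e01[OF s(1)] by auto
  then have "1 \<le> (g ^ s)\<^sup>2 * eps s \<omega>" using gpow by simp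
  also have "\<dots> \<le> V t \<omega>" unfolding V_def
    by (rule member_le_sum[OF s(1)]) (use e_bounds in auto)
  finally show "1 \<le> V t \<omega>" .
  have "V t \<omega> \<le> (\<Sum>s=1..t. (g ^ s)\<^sup>2)" unfolding V_def
    by (intro sum_mono mult_left_le) (use e_bounds in auto)
  also have "\<dots> \<le> (\<Sum>s=1..T. (g ^ s)\<^sup>2)" by (intro sum_mono2) (use t in auto)
  finally show "V t \<omega> \<le> (\<Sum>s=1..T. (g ^ s)\<^sup>2)" .
qed

lemma deviation_in_some_slice:
  assumes g: "g \<ge> 1" and \<delta>: "\<delta> > 0" and q: "q > 1"
    and D: "1 \<le> D" "(\<Sum>s=1..T. (g ^ s)\<^sup>2) \<le> q ^ D"
    and \<omega>: "\<omega> \<in> space M" and t: "t \<le> T" and V0: "0 < V t \<omega>"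
    and dev: "\<delta> * sqrt (V t \<omega>) < S t \<omega>"
  shows "\<exists>k<D. exp (2 * \<delta>\<^sup>2 / B\<^sup>2 * (1 - (q - 1)\<^sup>2 / 16))
      \<le> W (4 * \<delta> / (B\<^sup>2 * (sqrt (q ^ k) * root 4 q))) t \<omega>"
proof -
  have "1 \<le> V t \<omega>" "V t \<omega> \<le> q ^ D" using V_range[OF g \<omega> t V0] D(2) by auto
  then obtain k where k: "k < D" "q ^ k \<le> V t \<omega>" "V t \<omega> \<le> q ^ Suc k"
    using geometric_slice_exists D(1) by blast
  define lam where "lam = 4 * \<delta> / (B\<^sup>2 * (sqrt (q ^ k) * root 4 q))"
  have root: "root 4 q ^ 4 = q" "1 < root 4 q" using q by simp_all
  have "V t \<omega> \<le> q ^ k * root 4 q ^ 4" using k(3) root(1) by (simp add: mult.commute)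
  from slice_exponent_bound[OF B_pos \<delta> root(2) _ k(2) this dev]
  have "2 * \<delta>\<^sup>2 / B\<^sup>2 * (1 - (q - 1)\<^sup>2 / 16) \<le> lam * S t \<omega> - lam\<^sup>2 * B\<^sup>2 * V t \<omega> / 8"
    using q unfolding root(1) lam_def by simp
  then have "exp (2 * \<delta>\<^sup>2 / B\<^sup>2 * (1 - (q - 1)\<^sup>2 / 16)) \<le> W lam t \<omega>"
    unfolding W_def by simp
  then show ?thesis using k(1) unfolding lam_def by blast
qed

lemma peeled_deviation_bound:
  assumes g: "g \<ge> 1" and \<delta>: "\<delta> > 0" and q: "q > 1"
    and D: "1 \<le> D" "(\<Sum>s=1..T. (g ^ s)\<^sup>2) \<le> q ^ D"
  shows "measure M {\<omega>\<in>space M. \<exists>t\<in>{1..T}. 0 < V t \<omega> \<and> \<delta> * sqrt (V t \<omega>) < S t \<omega>}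
    \<le> real D * exp (- (2 * \<delta>\<^sup>2 / B\<^sup>2 * (1 - (q - 1)\<^sup>2 / 16)))"
proof -
  define L where "L = exp (2 * \<delta>\<^sup>2 / B\<^sup>2 * (1 - (q - 1)\<^sup>2 / 16))"
  define lam where "lam k = 4 * \<delta> / (B\<^sup>2 * (sqrt (q ^ k) * root 4 q))" for k :: nat
  define A where "A k = {\<omega>\<in>space M. \<exists>t\<in>{..T}. L \<le> W (lam k) t \<omega>}" for k
  have lam_pos: "lam k > 0" for k using B_pos \<delta> q by (simp add: lam_def)
  have L_pos: "L > 0" by (simp add: L_def)
  have A_sets: "A k \<in> sets M" for k
  proof -
    have [measurable]: "W (lam k) t \<in> borel_measurable M" for t
      using measurable_from_subalg[OF F_sub W_adapted] .
    show ?thesis unfolding A_def by measurable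
  qed
  have "{\<omega>\<in>space M. \<exists>t\<in>{1..T}. 0 < V t \<omega> \<and> \<delta> * sqrt (V t \<omega>) < S t \<omega>} \<subseteq> (\<Union>k<D. A k)"
  proof safe
    fix \<omega> t assume \<omega>: "\<omega> \<in> space M" and t: "t \<in> {1..T}"
      and V0: "0 < V t \<omega>" and dev: "\<delta> * sqrt (V t \<omega>) < S t \<omega>"
    have "t \<le> T" using t by simp
    from deviation_in_some_slice[OF g \<delta> q D \<omega> this V0 dev]
    obtain k where "k < D" "L \<le> W (lam k) t \<omega>" unfolding L_def lam_def by blast
    then show "\<omega> \<in> (\<Union>k<D. A k)" using \<omega> \<open>t \<le> T\<close> unfolding A_def by blast
  qed
  then have "measure M {\<omega>\<in>space M. \<exists>t\<in>{1..T}. 0 < V t \<omega> \<and> \<delta> * sqrt (V t \<omega>) < S t \<omega>}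
      \<le> measure M (\<Union>k<D. A k)"
    using A_sets by (intro finite_measure_mono) auto
  also have "\<dots> \<le> (\<Sum>k<D. measure M (A k))"
    using A_sets by (intro measure_UNION_le) auto
  also have "\<dots> \<le> (\<Sum>k<D. 1 / L)"
    unfolding A_def using W_maximal[OF lam_pos L_pos] by (intro sum_mono)
  also have "\<dots> = real D * exp (- (2 * \<delta>\<^sup>2 / B\<^sup>2 * (1 - (q - 1)\<^sup>2 / 16)))"
    by (simp add: L_def exp_minus field_simps)
  finally show ?thesis .
qed

lemma discounted_deviation_rescaled:
  assumes "\<gamma> * g = 1"
  shows "Rdisc X eps \<gamma> t \<omega> - Mdisc mu eps \<gamma> t \<omega> = \<gamma> ^ t * S t \<omega>"
  unfolding Rdisc_def Mdisc_def S_def sum_subtractf[symmetric] sum_distrib_left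
  by (intro sum.cong refl) (simp add: power_diff_inverse[OF assms] algebra_simps)

lemma discounted_count_rescaled:
  assumes "\<gamma> * g = 1"
  shows "Ndisc eps (\<gamma>\<^sup>2) t \<omega> = (\<gamma> ^ t)\<^sup>2 * V t \<omega>"
  unfolding Ndisc_def V_def sum_distrib_left
  by (intro sum.cong refl) (simp add: power_diff_inverse_squared[OF assms])

lemma discounted_horizon_rescaled:
  assumes "\<gamma> * g = 1"
  shows "ndisc (\<gamma>\<^sup>2) T = (\<gamma> ^ T)\<^sup>2 * (\<Sum>s=1..T. (g ^ s)\<^sup>2)"
  unfolding ndisc_def sum_distrib_left
  by (intro sum.cong refl) (simp add: power_diff_inverse_squared[OF assms])

lemma normalised_deviation_iff:
  assumes "\<gamma> > 0" "\<gamma> * g = 1"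
  shows "(0 < Ndisc eps (\<gamma>\<^sup>2) t \<omega> \<and>
           \<delta> < (Rdisc X eps \<gamma> t \<omega> - Mdisc mu eps \<gamma> t \<omega>) / sqrt (Ndisc eps (\<gamma>\<^sup>2) t \<omega>))
     \<longleftrightarrow> (0 < V t \<omega> \<and> \<delta> * sqrt (V t \<omega>) < S t \<omega>)"
proof -
  have \<gamma>t: "0 < \<gamma> ^ t" using assms(1) by simp
  have sqrt_N: "sqrt (Ndisc eps (\<gamma>\<^sup>2) t \<omega>) = \<gamma> ^ t * sqrt (V t \<omega>)"
    using \<gamma>t by (simp add: discounted_count_rescaled[OF assms(2)] real_sqrt_mult)
  have "0 < Ndisc eps (\<gamma>\<^sup>2) t \<omega> \<longleftrightarrow> 0 < V t \<omega>"
    using assms(1) by (simp add: discounted_count_rescaled[OF assms(2)] zero_less_mult_iff)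
  moreover have "\<delta> < (Rdisc X eps \<gamma> t \<omega> - Mdisc mu eps \<gamma> t \<omega>) / sqrt (Ndisc eps (\<gamma>\<^sup>2) t \<omega>)
      \<longleftrightarrow> \<delta> * sqrt (V t \<omega>) < S t \<omega>" if "0 < V t \<omega>"
    using assms(1) that
    by (simp add: discounted_deviation_rescaled[OF assms(2)] sqrt_N pos_less_divide_eq)
  ultimately show ?thesis by blast
qed

end


theorem theorem5:
  fixes M :: "'a measure" and X :: "nat \<Rightarrow> 'a \<Rightarrow> real" and F :: "nat \<Rightarrow> 'a measure"
    and eps :: "nat \<Rightarrow> 'a \<Rightarrow> real" and B \<gamma> \<delta> \<eta> :: real and T :: nat
  assumes "prob_space M"
    and B_pos: "B > 0"
    and X_meas: "\<And>t. t \<ge> 1 \<Longrightarrow> X t \<in> borel_measurable M"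
    and X_indep: "prob_space.indep_vars M (\<lambda>_. borel) X {1..}"
    and X_bounded: "\<And>t. t \<ge> 1 \<Longrightarrow> AE \<omega> in M. 0 \<le> X t \<omega> \<and> X t \<omega> \<le> B"
    and F_filt: "filtration (space M) F"
    and F_sub: "\<And>t. subalgebra M (F t)"
    and X_adapted: "\<And>s t. 1 \<le> s \<Longrightarrow> s \<le> t \<Longrightarrow> X s \<in> borel_measurable (F t)"
    and X_future_indep: "\<And>s t. t < s \<Longrightarrow> prob_space.indep_set M (sets (F t)) (sets (vimage_algebra (space M) (X s) borel))"
    and eps_01: "\<And>t \<omega>. t \<ge> 1 \<Longrightarrow> \<omega> \<in> space M \<Longrightarrow> eps t \<omega> \<in> {0, 1}"
    and eps_pred: "\<And>t. t \<ge> 1 \<Longrightarrow> eps t \<in> borel_measurable (F (t - 1))"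
    and \<gamma>_range: "0 < \<gamma>" "\<gamma> \<le> 1"
    and T_pos: "T \<ge> 1" and T_ge2: "\<gamma> = 1 \<Longrightarrow> T \<ge> 2"
    and \<delta>_pos: "\<delta> > 0" and \<eta>_pos: "\<eta> > 0"
  shows "measure M {\<omega> \<in> space M. \<exists>t\<in>{1..T}. Ndisc eps (\<gamma>\<^sup>2) t \<omega> > 0 \<and>
            (Rdisc X eps \<gamma> t \<omega> - Mdisc (\<lambda>s. prob_space.expectation M (X s)) eps \<gamma> t \<omega>)
              / sqrt (Ndisc eps (\<gamma>\<^sup>2) t \<omega>) > \<delta>}
         \<le> real_of_int \<lceil>ln (ndisc (\<gamma>\<^sup>2) T / \<gamma> ^ (2 * T)) / ln (1 + \<eta>)\<rceil>
             * exp (- (2 * \<delta>\<^sup>2 / B\<^sup>2) * (1 - \<eta>\<^sup>2 / 16))"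
proof -
  interpret prob_space M by fact
  define g where "g = 1 / \<gamma>"
  define U where "U = (\<Sum>s=1..T. (g ^ s)\<^sup>2)"
  define D where "D = nat \<lceil>ln U / ln (1 + \<eta>)\<rceil>"
  have g: "1 \<le> g" "\<gamma> * g = 1" "0 < g" using \<gamma>_range by (auto simp: g_def)
  interpret discounted_selection M X F eps B g
    by unfold_locales
       (fact B_pos g(3) X_bounded F_sub X_adapted X_future_indep eps_01 eps_pred
         filtration.space_F[OF F_filt] filtration.sets_F_mono[OF F_filt])+
  have "1 < U"
    unfolding U_def using T_ge2 g \<gamma>_range by (intro sum_power_squares_gt_one T_pos) (auto simp: g_def)
  then have D: "1 \<le> D" "U \<le> (1 + \<eta>) ^ D"
    using ceiling_log_ratio[of "1 + \<eta>" U] \<eta>_pos by (auto simp: D_def)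
  have "\<gamma> ^ (2 * T) = (\<gamma> ^ T)\<^sup>2" by (simp only: mult.commute[of 2 T] power_mult)
  then have "ndisc (\<gamma>\<^sup>2) T / \<gamma> ^ (2 * T) = U"
    using discounted_horizon_rescaled[OF g(2)] \<gamma>_range by (simp add: U_def)
  then have D_eq: "real D = real_of_int \<lceil>ln (ndisc (\<gamma>\<^sup>2) T / \<gamma> ^ (2 * T)) / ln (1 + \<eta>)\<rceil>"
    using D(1) by (simp add: D_def)
  have "(\<lambda>s. expectation (X s)) = mu" by (simp add: fun_eq_iff mu_def)
  then have event: "{\<omega> \<in> space M. \<exists>t\<in>{1..T}. Ndisc eps (\<gamma>\<^sup>2) t \<omega> > 0 \<and>
            (Rdisc X eps \<gamma> t \<omega> - Mdisc (\<lambda>s. expectation (X s)) eps \<gamma> t \<omega>)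
              / sqrt (Ndisc eps (\<gamma>\<^sup>2) t \<omega>) > \<delta>}
      = {\<omega>\<in>space M. \<exists>t\<in>{1..T}. 0 < V t \<omega> \<and> \<delta> * sqrt (V t \<omega>) < S t \<omega>}"
    using normalised_deviation_iff[OF \<gamma>_range(1) g(2)] by simp
  have "measure M {\<omega>\<in>space M. \<exists>t\<in>{1..T}. 0 < V t \<omega> \<and> \<delta> * sqrt (V t \<omega>) < S t \<omega>}
      \<le> real D * exp (- (2 * \<delta>\<^sup>2 / B\<^sup>2) * (1 - \<eta>\<^sup>2 / 16))"
    using peeled_deviation_bound[OF g(1) \<delta>_pos _ D[unfolded U_def]] \<eta>_pos by simp
  then show ?thesis unfolding event D_eq .
qed

end
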